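(* Let $n\ge3$, $\delta\in(0,1/2)$ and $A>0$. Let $\{S_i\}$ be a finite collection of spheres in $\mathbb{R}^n$ with radii in a fixed compact interval $[c^{-1},c]$ ($c\ge1$), such that \[ \#\{i: S_i\in B_\rho\}\le A\rho \] for every ball $B_\rho\subset\mathbb{R}^{n+1}$ of radius $\rho\ge\delta$. Then for all $a_i\in[0,\infty)$, \[ \Big\|\sum_i a_i1_{S_i^\delta}\Big\|_{L^2(\mathbb{R}^n)}\le C\,\delta\log(\delta^{-1})\,A^{1/2}\Big(\sum_i a_i^2\Big)^{1/2}, \] with $C$ depending only on $n$ and $c$.
   Context: A sphere $S(x,t)=\{y\in\mathbb{R}^n:|y-x|=t\}$ is identified with the point $(x,t)\in\mathbb{R}^{n+1}$, so "$S_i\in B_\rho$" means the point $(x_i,t_i)$ lies in $B_\rho$. $S^\delta$ denotes the $\delta$-neighborhood of $S$ in $\mathbb{R}^n$. *)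

theory Defs
  imports "HOL-Analysis.Analysis"
begin

definition nbhd :: "'a::metric_space set \<Rightarrow> real \<Rightarrow> 'a set" where
  "nbhd S \<delta> = {y. \<exists>z\<in>S. dist y z < \<delta>}"

end

theory Submission
  imports Defs "HOL-Analysis.Analysis"
begin

text \<open>Each \<open>\<delta>\<close>-neighbourhood of a sphere \<open>S(x, r)\<close> lies in the shell
  \<open>{y. \<bar>dist y x - r\<bar> < \<delta>}\<close>, so after expanding the square it suffices to bound
  \<open>\<Sum>i j. a\<^sub>i a\<^sub>j |F\<^sub>i \<inter> F\<^sub>j|\<close> for these shells \<open>F\<^sub>i\<close>, and by Schur's test the row sums
  \<open>\<Sum>j. |F\<^sub>i \<inter> F\<^sub>j|\<close>. By the law of cosines two shells whose centres are at distance
  \<open>d > \<delta>\<close> meet inside a slab of width \<open>O(\<delta>/d)\<close> perpendicular to \<open>x\<^sub>j - x\<^sub>i\<close>, and for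
  \<open>n \<ge> 3\<close> the part of a shell of thickness \<open>\<delta>\<close> inside a slab of width \<open>w\<close> has volume
  \<open>O(\<delta> w)\<close> (Fubini across the slab). Hence \<open>|F\<^sub>i \<inter> F\<^sub>j| = O(\<delta>\<^sup>2 / max d \<delta>)\<close>, and this
  vanishes unless \<open>(x\<^sub>j, r\<^sub>j)\<close> is within \<open>O(c)\<close> of \<open>(x\<^sub>i, r\<^sub>i)\<close>, where it is also
  \<open>O(\<delta>\<^sup>2 / max (dist (x\<^sub>i, r\<^sub>i) (x\<^sub>j, r\<^sub>j)) \<delta>)\<close>. Splitting the indices \<open>j\<close> dyadically by
  this distance, the counting hypothesis on each dyadic ball bounds the row sum by
  \<open>O(A \<delta>\<^sup>2 log(1/\<delta>))\<close>. So the squared \<open>L\<^sup>2\<close> norm is \<open>O(\<delta>\<^sup>2 log(1/\<delta>) A \<Sum>i. a\<^sub>i\<^sup>2)\<close>,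
  one logarithm better than claimed.\<close>

section \<open>Volume of a slab of a spherical annulus\<close>

lemma power_diff_le_mult_power:
  fixes x y :: real
  assumes "0 \<le> y" "y \<le> x"
  shows "x ^ Suc m - y ^ Suc m \<le> real (Suc m) * x ^ m * (x - y)"
proof (induction m)
  case (Suc m)
  have "x ^ Suc (Suc m) - y ^ Suc (Suc m) = x * (x ^ Suc m - y ^ Suc m) + y ^ Suc m * (x - y)"
    by (simp add: algebra_simps)
  also have "\<dots> \<le> x * (real (Suc m) * x ^ m * (x - y)) + x ^ Suc m * (x - y)"
    using assms Suc by (intro add_mono mult_left_mono mult_right_mono power_mono) auto
  also have "\<dots> = real (Suc (Suc m)) * x ^ Suc m * (x - y)"
    by (simp add: algebra_simps)
  finally show ?case .
qed simp

lemma power_diff_le_mult_power2_diff: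
  fixes x y :: real
  assumes "0 \<le> y" "y \<le> x" "2 \<le> m"
  shows "x ^ m - y ^ m \<le> real m * x ^ (m - 2) * (x\<^sup>2 - y\<^sup>2)"
proof -
  obtain k where m: "m = Suc (Suc k)"
    using assms(3) by (metis add_2_eq_Suc le_Suc_ex)
  have "x ^ m - y ^ m \<le> real m * x ^ k * (x * (x - y))"
    using power_diff_le_mult_power[OF assms(1,2), of "Suc k"] m by (simp add: algebra_simps)
  also have "\<dots> \<le> real m * x ^ k * ((x + y) * (x - y))"
    using assms by (intro mult_left_mono mult_right_mono) auto
  also have "\<dots> = real m * x ^ (m - 2) * (x\<^sup>2 - y\<^sup>2)"
    by (simp add: m power2_eq_square algebra_simps)
  finally show ?thesis .
qed

lemma emeasure_PiM_cball_diff: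
  fixes A :: "'i set"
  defines "B \<equiv> \<lambda>\<rho>. {g. sqrt (\<Sum>i\<in>A. (g i)\<^sup>2) \<le> \<rho>} \<inter> space (Pi\<^sub>M A (\<lambda>_. lborel))"
  assumes "finite A" "0 < \<rho>1" "\<rho>1 \<le> \<rho>2"
  shows "emeasure (Pi\<^sub>M A (\<lambda>_. lborel)) (B \<rho>2 - B \<rho>1)
    = ennreal (unit_ball_vol (card A) * (\<rho>2 ^ card A - \<rho>1 ^ card A))"
proof -
  have "B \<rho> \<in> sets (Pi\<^sub>M A (\<lambda>_. lborel))" for \<rho>
    unfolding B_def by measurable
  moreover have "B \<rho>1 \<subseteq> B \<rho>2"
    using assms by (auto simp: B_def)
  moreover have "emeasure (Pi\<^sub>M A (\<lambda>_. lborel)) (B \<rho>) = ennreal (unit_ball_vol (card A) * \<rho> ^ card A)"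
    if "0 < \<rho>" for \<rho>
    unfolding B_def by (rule emeasure_cball_aux[OF assms(2) that])
  ultimately show ?thesis
    using assms by (simp add: emeasure_Diff ennreal_minus[symmetric] right_diff_distrib power_mono)
qed

lemma emeasure_PiM_annulus_le:
  fixes A :: "'i set"
  assumes A: "finite A" "2 \<le> card A" and s: "s1 \<le> s2" "0 < s2"
  shows "emeasure (Pi\<^sub>M A (\<lambda>_. lborel))
     ({g. s1 < (\<Sum>i\<in>A. (g i)\<^sup>2) \<and> (\<Sum>i\<in>A. (g i)\<^sup>2) < s2} \<inter> space (Pi\<^sub>M A (\<lambda>_. lborel)))
     \<le> ennreal (unit_ball_vol (card A) * (sqrt s2 ^ card A - sqrt (max 0 s1) ^ card A))"
    (is "emeasure ?M ?S \<le> _")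
proof -
  let ?B = "\<lambda>\<rho>. {g. sqrt (\<Sum>i\<in>A. (g i)\<^sup>2) \<le> \<rho>} \<inter> space ?M"
  have "0 \<le> (\<Sum>i\<in>A. (g i)\<^sup>2)" for g :: "'i \<Rightarrow> real"
    by (simp add: sum_nonneg)
  then show ?thesis
  proof (cases "s1 \<le> 0")
    case True
    have "?S \<subseteq> ?B (sqrt s2)"
      by (auto simp: real_sqrt_le_iff')
    then have "emeasure ?M ?S \<le> emeasure ?M (?B (sqrt s2))"
      by (intro emeasure_mono) measurable
    then show ?thesis
      using emeasure_cball_aux[OF A(1), of "sqrt s2"] True s A(2) by (simp add: power_0_left)
  next
    case False
    have "?S \<subseteq> ?B (sqrt s2) - ?B (sqrt s1)"
      using False by (auto simp: real_sqrt_le_iff' not_le)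
    then have "emeasure ?M ?S \<le> emeasure ?M (?B (sqrt s2) - ?B (sqrt s1))"
      by (intro emeasure_mono) measurable
    then show ?thesis
      using emeasure_PiM_cball_diff[OF A(1), of "sqrt s1" "sqrt s2"] s False by simp
  qed
qed

lemma emeasure_PiM_annulus_slice_le:
  fixes A :: "'i set" and z R1 R2 :: real
  assumes A: "finite A" "2 \<le> card A" and R: "0 \<le> R1" "R1 \<le> R2"
  shows "emeasure (Pi\<^sub>M A (\<lambda>_. lborel))
     ({g. R1\<^sup>2 < z\<^sup>2 + (\<Sum>i\<in>A. (g i)\<^sup>2) \<and> z\<^sup>2 + (\<Sum>i\<in>A. (g i)\<^sup>2) < R2\<^sup>2} \<inter> space (Pi\<^sub>M A (\<lambda>_. lborel)))
     \<le> ennreal (unit_ball_vol (card A) * card A * R2 ^ (card A - 2) * (R2\<^sup>2 - R1\<^sup>2))"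
    (is "emeasure ?M ?S \<le> _")
proof (cases "z\<^sup>2 < R2\<^sup>2")
  case False
  have "0 \<le> (\<Sum>i\<in>A. (g i)\<^sup>2)" for g :: "'i \<Rightarrow> real"
    by (simp add: sum_nonneg)
  then have "?S = {}"
    using False by (auto simp: not_less) (smt (verit))
  then show ?thesis
    by simp
next
  case True
  let ?m = "card A"
  define \<rho>1 \<rho>2 where "\<rho>1 = sqrt (max 0 (R1\<^sup>2 - z\<^sup>2))" and "\<rho>2 = sqrt (R2\<^sup>2 - z\<^sup>2)"
  have \<rho>: "0 \<le> \<rho>1" "\<rho>1 \<le> \<rho>2" "\<rho>2 \<le> R2" "\<rho>2\<^sup>2 - \<rho>1\<^sup>2 \<le> R2\<^sup>2 - R1\<^sup>2"
    using True R by (auto simp: \<rho>1_def \<rho>2_def real_sqrt_le_iff' power_mono)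
  have "?S = {g. R1\<^sup>2 - z\<^sup>2 < (\<Sum>i\<in>A. (g i)\<^sup>2) \<and> (\<Sum>i\<in>A. (g i)\<^sup>2) < R2\<^sup>2 - z\<^sup>2} \<inter> space ?M"
    by auto
  then have "emeasure ?M ?S \<le> ennreal (unit_ball_vol ?m * (\<rho>2 ^ ?m - \<rho>1 ^ ?m))"
    using emeasure_PiM_annulus_le[OF A, of "R1\<^sup>2 - z\<^sup>2" "R2\<^sup>2 - z\<^sup>2"] True R
    by (simp add: \<rho>1_def \<rho>2_def power_mono)
  also have "\<dots> \<le> ennreal (unit_ball_vol ?m * ?m * R2 ^ (?m - 2) * (R2\<^sup>2 - R1\<^sup>2))"
  proof (intro ennreal_leI)
    have "\<rho>2 ^ ?m - \<rho>1 ^ ?m \<le> ?m * \<rho>2 ^ (?m - 2) * (\<rho>2\<^sup>2 - \<rho>1\<^sup>2)"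
      using power_diff_le_mult_power2_diff \<rho> A(2) by blast
    also have "\<dots> \<le> ?m * R2 ^ (?m - 2) * (R2\<^sup>2 - R1\<^sup>2)"
      using \<rho> by (intro mult_mono mult_left_mono power_mono) auto
    finally show "unit_ball_vol ?m * (\<rho>2 ^ ?m - \<rho>1 ^ ?m) \<le> unit_ball_vol ?m * ?m * R2 ^ (?m - 2) * (R2\<^sup>2 - R1\<^sup>2)"
      by (simp add: mult.assoc mult_left_mono)
  qed
  finally show ?thesis .
qed

lemma inner_sum_Basis_scaleR:
  "i \<in> Basis \<Longrightarrow> (\<Sum>b\<in>Basis. f b *\<^sub>R b) \<bullet> (i::'a::euclidean_space) = f i"
  by (simp add: inner_sum_left inner_Basis if_distrib cong: if_cong)

lemma norm_sum_Basis_scaleR_sq: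
  "(norm (\<Sum>b\<in>Basis. f b *\<^sub>R (b::'a::euclidean_space)))\<^sup>2 = (\<Sum>b\<in>Basis. (f b)\<^sup>2)"
proof -
  have "(norm (\<Sum>b\<in>Basis. f b *\<^sub>R b))\<^sup>2 = (\<Sum>i\<in>Basis. ((\<Sum>b\<in>Basis. f b *\<^sub>R b) \<bullet> i) * ((\<Sum>b\<in>Basis. f b *\<^sub>R b) \<bullet> (i::'a)))"
    unfolding power2_norm_eq_inner by (rule euclidean_inner)
  then show ?thesis
    by (simp add: inner_sum_Basis_scaleR power2_eq_square)
qed

lemma emeasure_annulus_Basis_slab_eq:
  fixes b :: "'a::euclidean_space"
  defines "M \<equiv> Pi\<^sub>M (Basis - {b}) (\<lambda>_. lborel :: real measure)"
  assumes b: "b \<in> Basis" and R: "0 \<le> R1" "R1 \<le> R2"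
  shows "emeasure lborel {y::'a. R1 < norm y \<and> norm y < R2 \<and> t \<le> y \<bullet> b \<and> y \<bullet> b \<le> t + w}
    = (\<integral>\<^sup>+ z. indicator {t..t+w} z * emeasure M
        ({g. R1\<^sup>2 < z\<^sup>2 + (\<Sum>i\<in>Basis - {b}. (g i)\<^sup>2) \<and> z\<^sup>2 + (\<Sum>i\<in>Basis - {b}. (g i)\<^sup>2) < R2\<^sup>2} \<inter> space M) \<partial>lborel)"
proof -
  define A where "A = Basis - {b}"
  have A: "finite A" "b \<notin> A" "Basis = insert b A"
    using b by (auto simp: A_def)
  have MA: "M = Pi\<^sub>M A (\<lambda>_. lborel)"
    by (simp add: M_def A_def)
  let ?M' = "Pi\<^sub>M Basis (\<lambda>_. lborel :: real measure)"
  let ?S = "\<lambda>z. {g. R1\<^sup>2 < z\<^sup>2 + (\<Sum>i\<in>A. (g i)\<^sup>2) \<and> z\<^sup>2 + (\<Sum>i\<in>A. (g i)\<^sup>2) < R2\<^sup>2} \<inter> space M"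
  let ?P = "{f. R1\<^sup>2 < (\<Sum>i\<in>Basis. (f i)\<^sup>2) \<and> (\<Sum>i\<in>Basis. (f i)\<^sup>2) < R2\<^sup>2 \<and> t \<le> f b \<and> f b \<le> t + w} \<inter> space ?M'"
  interpret product_sigma_finite "\<lambda>_. lborel :: real measure"
    by standard
  have P: "?P \<in> sets ?M'"
    using b by measurable
  have norm_less_iff: "(R1 < norm y) = (R1\<^sup>2 < (norm y)\<^sup>2)" "(norm y < R2) = ((norm y)\<^sup>2 < R2\<^sup>2)" for y :: 'a
    using R by (auto intro: power_strict_mono simp: power_less_imp_less_base)
  have slice: "indicator ?P (g(b := z)) = (indicator {t..t+w} z * indicator (?S z) g :: ennreal)"
    if "g \<in> space M" for g z
  proof -
    have "(\<Sum>i\<in>Basis. ((g(b := z)) i)\<^sup>2) = z\<^sup>2 + (\<Sum>i\<in>A. (g i)\<^sup>2)"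
      unfolding A(3) using A(1,2) by (simp add: sum.insert) (intro sum.cong, auto)
    moreover have "g(b := z) \<in> space ?M'"
      using that unfolding A(3) MA by (auto simp: space_PiM PiE_def extensional_def)
    ultimately show ?thesis
      using that by (auto simp: indicator_def)
  qed
  have "emeasure lborel {y::'a. R1 < norm y \<and> norm y < R2 \<and> t \<le> y \<bullet> b \<and> y \<bullet> b \<le> t + w}
      = emeasure ?M' ?P"
    by (subst lborel_eq, subst emeasure_distr)
      (auto simp: norm_less_iff norm_sum_Basis_scaleR_sq inner_sum_Basis_scaleR b intro!: arg_cong2[where f="emeasure"])
  also have "\<dots> = (\<integral>\<^sup>+ f. indicator ?P f \<partial>?M')"
    using P by (rule nn_integral_indicator[symmetric])
  also have "\<dots> = (\<integral>\<^sup>+ z. \<integral>\<^sup>+ g. indicator ?P (g(b := z)) \<partial>M \<partial>lborel)"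
    unfolding MA A(3) by (rule product_nn_integral_insert_rev[OF A(1,2)]) (use P A(3) in simp)
  also have "\<dots> = (\<integral>\<^sup>+ z. \<integral>\<^sup>+ g. indicator {t..t+w} z * indicator (?S z) g \<partial>M \<partial>lborel)"
    using slice by (intro nn_integral_cong) simp
  also have "\<dots> = (\<integral>\<^sup>+ z. indicator {t..t+w} z * emeasure M (?S z) \<partial>lborel)"
  proof (intro nn_integral_cong)
    show "(\<integral>\<^sup>+ g. indicator {t..t+w} z * indicator (?S z) g \<partial>M) = indicator {t..t+w} z * emeasure M (?S z)" for z
      unfolding MA by (rule nn_integral_cmult_indicator) measurable
  qed
  finally show ?thesis
    by (simp only: A_def)
qed

lemma emeasure_annulus_Basis_slab_le:
  fixes b :: "'a::euclidean_space"
  assumes b: "b \<in> Basis" and dim: "3 \<le> DIM('a)" and R: "0 \<le> R1" "R1 \<le> R2" and w: "0 \<le> w"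
  shows "emeasure lborel {y::'a. R1 < norm y \<and> norm y < R2 \<and> t \<le> y \<bullet> b \<and> y \<bullet> b \<le> t + w}
     \<le> ennreal (unit_ball_vol (DIM('a) - 1) * (DIM('a) - 1) * R2 ^ (DIM('a) - 3) * (R2\<^sup>2 - R1\<^sup>2) * w)"
proof -
  have A: "finite (Basis - {b})" "2 \<le> card (Basis - {b})" "card (Basis - {b}) = DIM('a) - 1"
    using b dim by auto
  let ?K = "unit_ball_vol (DIM('a) - 1) * (DIM('a) - 1) * R2 ^ (DIM('a) - 3) * (R2\<^sup>2 - R1\<^sup>2)"
  have "emeasure lborel {y::'a. R1 < norm y \<and> norm y < R2 \<and> t \<le> y \<bullet> b \<and> y \<bullet> b \<le> t + w}
      \<le> (\<integral>\<^sup>+ z. ennreal ?K * indicator {t..t+w} z \<partial>lborel)"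
    unfolding emeasure_annulus_Basis_slab_eq[OF b R]
    using emeasure_PiM_annulus_slice_le[OF A(1,2) R] A(3)
    by (intro nn_integral_mono) (auto simp: indicator_def numeral_3_eq_3)
  also have "\<dots> = ennreal (?K * w)"
    using w R dim by (simp add: nn_integral_cmult_indicator ennreal_mult power_mono)
  finally show ?thesis .
qed

lemma emeasure_lborel_rigid_image:
  fixes T :: "real^'m::{finite,wellorder} \<Rightarrow> real^'m::{finite,wellorder}"
  assumes T: "orthogonal_transformation T" and S: "bounded S" "S \<in> sets lborel"
    and S': "(\<lambda>z. x + z) ` T ` S \<in> sets lborel"
  shows "emeasure lborel ((\<lambda>z. x + z) ` T ` S) = emeasure lborel S"
proof -
  have "measure lebesgue ((\<lambda>z. x + z) ` T ` S) = measure lebesgue (T ` S)"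
    by (rule measure_translation)
  also have "\<dots> = measure lebesgue S"
    using S by (intro measure_orthogonal_image[OF T] bounded_set_imp_lmeasurable sets_completionI_sets)
  finally have "measure lborel ((\<lambda>z. x + z) ` T ` S) = measure lborel S"
    using S S' by (simp add: measure_completion)
  moreover have "bounded ((\<lambda>z. x + z) ` T ` S)"
    using S(1) orthogonal_transformation_linear[OF T]
    by (simp add: bounded_translation bounded_linear_image linear_conv_bounded_linear)
  then have "emeasure lborel ((\<lambda>z. x + z) ` T ` S) \<noteq> \<infinity>" "emeasure lborel S \<noteq> \<infinity>"
    using emeasure_bounded_finite S(1) by (simp_all add: less_top)
  ultimately show ?thesis
    by (simp add: emeasure_eq_ennreal_measure)
qed

lemma emeasure_annulus_slab_le_wellorder:
  fixes x u :: "real^'m::{finite,wellorder}"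
  assumes dim: "3 \<le> CARD('m)" and u: "norm u = 1" and R: "0 \<le> R1" "R1 \<le> R2" and w: "0 \<le> w"
  shows "emeasure lborel {y. R1 < dist y x \<and> dist y x < R2 \<and> t \<le> (y - x) \<bullet> u \<and> (y - x) \<bullet> u \<le> t + w}
     \<le> ennreal (unit_ball_vol (CARD('m) - 1) * (CARD('m) - 1) * R2 ^ (CARD('m) - 3) * (R2\<^sup>2 - R1\<^sup>2) * w)"
proof -
  obtain k :: 'm where True
    by simp
  let ?e = "axis k (1::real)"
  obtain T where T: "orthogonal_transformation T" and Te: "T ?e = u"
    using rotation_rightward_line[of u k] u by auto
  define Y where "Y = {z. R1 < norm z \<and> norm z < R2 \<and> t \<le> z \<bullet> ?e \<and> z \<bullet> ?e \<le> t + w}"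
  define X where "X = {y. R1 < dist y x \<and> dist y x < R2 \<and> t \<le> (y - x) \<bullet> u \<and> (y - x) \<bullet> u \<le> t + w}"
  have T_inner: "T a \<bullet> T b = a \<bullet> b" and T_norm: "norm (T a) = norm a" for a b
    using T by (simp_all add: orthogonal_transformation_def orthogonal_transformation_norm)
  have XY: "X = (\<lambda>z. x + z) ` T ` Y"
  proof (intro equalityI subsetI)
    fix y assume y: "y \<in> X"
    obtain z where z: "T z = y - x"
      using orthogonal_transformation_surj[OF T] by (metis surjD)
    have "z \<in> Y"
      using y z T_norm[of z] T_inner[of z ?e] Te by (auto simp: X_def Y_def dist_norm)
    then show "y \<in> (\<lambda>z. x + z) ` T ` Y"
      using z by (auto intro!: image_eqI[of y _ "y - x"] image_eqI[of "y - x" T z])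
  next
    fix y assume "y \<in> (\<lambda>z. x + z) ` T ` Y"
    then obtain z where "z \<in> Y" "y = x + T z"
      by auto
    then show "y \<in> X"
      using T_norm[of z] T_inner[of z ?e] Te by (auto simp: X_def Y_def dist_norm)
  qed
  have "bounded Y"
    unfolding Y_def by (rule bounded_subset[of "cball 0 R2"]) auto
  moreover have "X \<in> sets lborel" "Y \<in> sets lborel"
    unfolding X_def Y_def by measurable
  ultimately have "emeasure lborel X = emeasure lborel Y"
    using emeasure_lborel_rigid_image[OF T, of Y x] XY by simp
  also have "\<dots> \<le> ennreal (unit_ball_vol (CARD('m) - 1) * (CARD('m) - 1) * R2 ^ (CARD('m) - 3) * (R2\<^sup>2 - R1\<^sup>2) * w)"
    unfolding Y_def using emeasure_annulus_Basis_slab_le[of ?e, OF _ _ R w] dim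
    by (simp add: axis_in_Basis_iff)
  finally show ?thesis
    unfolding X_def .
qed

text \<open>Rotation invariance of Lebesgue measure (\<open>measure_orthogonal_image\<close>) is only available in the library
  for \<open>real^'m\<close> with a well-ordered index type \<open>'m\<close>, so slab volumes in \<open>real^'n\<close> are
  transported along a coordinate permutation from the well-ordered copy \<open>'n idx\<close>.\<close>

typedef ('a::finite) idx = "{..<CARD('a)}"
  by (rule exI[of _ 0]) simp

instantiation idx :: (finite) linorder
begin
definition "less_eq_idx (x :: 'a idx) (y :: 'a idx) \<longleftrightarrow> Rep_idx x \<le> Rep_idx y"
definition "less_idx (x :: 'a idx) (y :: 'a idx) \<longleftrightarrow> Rep_idx x < Rep_idx y"
instance
  by standard (auto simp: less_eq_idx_def less_idx_def Rep_idx_inject)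
end

lemma UNIV_idx: "(UNIV :: 'a::finite idx set) = Abs_idx ` {..<CARD('a)}"
  by (metis type_definition.univ type_definition_idx)

instance idx :: (finite) finite
  by standard (simp add: UNIV_idx)

instance idx :: (finite) wellorder
proof
  fix P :: "'a idx \<Rightarrow> bool" and a :: "'a idx"
  assume "\<And>x. (\<And>y. y < x \<Longrightarrow> P y) \<Longrightarrow> P x"
  then show "P a"
    by (induct "Rep_idx a" arbitrary: a rule: less_induct) (metis less_idx_def)
qed

lemma card_idx: "CARD('a idx) = CARD('a::finite)"
proof -
  have "inj_on (Abs_idx :: nat \<Rightarrow> 'a idx) {..<CARD('a)}"
    by (meson Abs_idx_inject inj_onI)
  then show ?thesis
    by (simp add: UNIV_idx card_image)
qed

lemma prod_Basis_vec: "(\<Prod>b\<in>Basis. (v::real^'n::finite) \<bullet> b) = (\<Prod>i\<in>UNIV. v $ i)"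
proof -
  have "inj (\<lambda>i::'n. axis i (1::real))"
    by (auto intro!: injI simp: axis_eq_axis)
  then show ?thesis
    unfolding Basis_vec_def by (simp add: UNION_singleton_eq_range prod.reindex cart_eq_inner_axis)
qed

locale coordinate_permutation =
  fixes \<sigma> :: "'m::finite \<Rightarrow> 'n::finite"
  assumes bij: "bij \<sigma>"
begin

definition permute :: "real^'n \<Rightarrow> real^'m" where
  "permute y = (\<chi> j. y $ \<sigma> j)"

lemma permute_nth [simp]: "permute y $ j = y $ \<sigma> j"
  by (simp add: permute_def)

lemma permute_diff: "permute (a - b) = permute a - permute b"
  by (simp add: vec_eq_iff)

lemma permute_inner: "permute a \<bullet> permute b = a \<bullet> b"
  using sum.reindex_bij_betw[OF bij, of "\<lambda>i. a $ i \<bullet> b $ i"] by (simp add: inner_vec_def)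

lemma dist_permute: "dist (permute a) (permute b) = dist a b"
  by (simp add: dist_norm norm_eq_sqrt_inner permute_diff[symmetric] permute_inner)

lemma permute_measurable: "permute \<in> borel_measurable borel"
proof -
  have "linear permute"
    by (rule linearI) (simp_all add: vec_eq_iff)
  then show ?thesis
    by (intro borel_measurable_continuous_onI linear_continuous_on linear_conv_bounded_linear[THEN iffD1])
qed

lemma distr_permute_lborel: "distr lborel borel permute = lborel"
proof (rule lborel_eqI[symmetric])
  fix l u :: "real^'m"
  assume le: "\<And>b. b \<in> Basis \<Longrightarrow> l \<bullet> b \<le> u \<bullet> b"
  let ?unpermute = "\<lambda>v::real^'m. \<chi> i. v $ inv \<sigma> i"
  have \<sigma>_inv: "\<sigma> (inv \<sigma> i) = i" "inv \<sigma> (\<sigma> j) = j" for i j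
    using bij by (simp_all add: bij_is_surj surj_f_inv_f bij_is_inj)
  have "permute -` box l u = box (?unpermute l) (?unpermute u)"
    by (auto simp: mem_box_cart) (metis \<sigma>_inv)+
  moreover have "l $ j \<le> u $ j" for j
    using le[of "axis j 1"] by (simp add: cart_eq_inner_axis axis_in_Basis_iff)
  then have "\<forall>b\<in>Basis. ?unpermute l \<bullet> b \<le> ?unpermute u \<bullet> b"
    by (auto simp: Basis_vec_def inner_axis)
  moreover have "(\<Prod>i\<in>UNIV. u $ inv \<sigma> i - l $ inv \<sigma> i) = (\<Prod>j\<in>UNIV. u $ j - l $ j)"
    by (rule prod.reindex_bij_betw[OF bij_betw_inv_into[OF bij]])
  ultimately show "emeasure (distr lborel borel permute) (box l u) = ennreal (\<Prod>b\<in>Basis. (u - l) \<bullet> b)"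
    using permute_measurable
    by (simp add: emeasure_distr emeasure_lborel_box_eq prod_Basis_vec)
qed simp

lemma emeasure_lborel_permute_vimage: "X \<in> sets borel \<Longrightarrow> emeasure lborel (permute -` X) = emeasure lborel X"
  using emeasure_distr[of permute lborel borel X] permute_measurable distr_permute_lborel by simp

end

lemma emeasure_annulus_slab_le:
  fixes x u :: "real^'n::finite"
  assumes dim: "3 \<le> CARD('n)" and u: "norm u = 1" and R: "0 \<le> R1" "R1 \<le> R2" and w: "0 \<le> w"
  shows "emeasure lborel {y. R1 < dist y x \<and> dist y x < R2 \<and> t \<le> (y - x) \<bullet> u \<and> (y - x) \<bullet> u \<le> t + w}
     \<le> ennreal (unit_ball_vol (CARD('n) - 1) * (CARD('n) - 1) * R2 ^ (CARD('n) - 3) * (R2\<^sup>2 - R1\<^sup>2) * w)"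
proof -
  obtain \<sigma> :: "'n idx \<Rightarrow> 'n" where "bij \<sigma>"
    using finite_same_card_bij[of "UNIV :: 'n idx set" "UNIV :: 'n set"] by (auto simp: card_idx)
  interpret coordinate_permutation \<sigma>
    by standard fact
  let ?X = "{y. R1 < dist y (permute x) \<and> dist y (permute x) < R2 \<and>
      t \<le> (y - permute x) \<bullet> permute u \<and> (y - permute x) \<bullet> permute u \<le> t + w}"
  have "{y. R1 < dist y x \<and> dist y x < R2 \<and> t \<le> (y - x) \<bullet> u \<and> (y - x) \<bullet> u \<le> t + w} = permute -` ?X"
    by (simp only: vimage_Collect_eq dist_permute permute_diff[symmetric] permute_inner)
  moreover have "emeasure lborel (permute -` ?X) = emeasure lborel ?X"
    by (rule emeasure_lborel_permute_vimage) measurable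
  ultimately have "emeasure lborel {y. R1 < dist y x \<and> dist y x < R2 \<and> t \<le> (y - x) \<bullet> u \<and> (y - x) \<bullet> u \<le> t + w}
      = emeasure lborel ?X"
    by (simp only:)
  also have "\<dots> \<le> ennreal (unit_ball_vol (CARD('n) - 1) * (CARD('n) - 1) * R2 ^ (CARD('n) - 3) * (R2\<^sup>2 - R1\<^sup>2) * w)"
  proof -
    have "norm (permute u) = 1"
      using u by (simp only: norm_eq_sqrt_inner permute_inner)
    then show ?thesis
      using emeasure_annulus_slab_le_wellorder[OF _ _ R w, of "permute u" "permute x" t] dim
      by (simp only: card_idx)
  qed
  finally show ?thesis .
qed

section \<open>Intersections of two shells\<close>

definition shell :: "'a::metric_space \<Rightarrow> real \<Rightarrow> real \<Rightarrow> 'a set" where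
  "shell x r \<delta> = {y. \<bar>dist y x - r\<bar> < \<delta>}"

lemma nbhd_sphere_subset_shell: "nbhd (sphere x r) \<delta> \<subseteq> shell x r \<delta>"
proof
  fix y assume "y \<in> nbhd (sphere x r) \<delta>"
  then obtain z where z: "dist x z = r" "dist y z < \<delta>"
    by (auto simp: nbhd_def)
  have "\<bar>dist y x - dist z x\<bar> \<le> dist y z"
    using dist_triangle[of y x z] dist_triangle[of z x y] by (simp add: dist_commute abs_le_iff)
  then show "y \<in> shell x r \<delta>"
    using z by (simp add: shell_def dist_commute)
qed

lemma shell_sets [measurable]: "shell (x::'a::euclidean_space) r \<delta> \<in> sets lborel"
  unfolding shell_def by measurable

lemma bounded_shell: "bounded (shell x r \<delta>)"
  by (rule bounded_subset[of "cball x (\<bar>r\<bar> + \<bar>\<delta>\<bar>)"]) (auto simp: shell_def dist_commute)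

lemma power2_sum_minus_max_le:
  fixes r \<delta> :: real
  assumes "0 \<le> r" "0 < \<delta>"
  shows "(r + \<delta>)\<^sup>2 - (max 0 (r - \<delta>))\<^sup>2 \<le> 4 * \<delta> * max r \<delta>"
proof (cases "r \<le> \<delta>")
  case True
  then have "(r + \<delta>)\<^sup>2 \<le> (2 * \<delta>)\<^sup>2"
    using assms by (intro power_mono) auto
  then show ?thesis
    using True by (simp add: power2_eq_square max_def)
next
  case False
  then show ?thesis
    by (simp add: max_def power2_eq_square algebra_simps)
qed

definition shell_slab_const :: "nat \<Rightarrow> real \<Rightarrow> real" where
  "shell_slab_const n c = unit_ball_vol (n - 1) * (n - 1) * (c + 1) ^ (n - 3) * (4 * (c + 1))"

lemma shell_slab_const_nonneg: "0 \<le> c \<Longrightarrow> 0 \<le> shell_slab_const n c"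
  by (simp add: shell_slab_const_def)

lemma emeasure_shell_slab_le:
  fixes x u :: "real^'n::finite"
  assumes dim: "3 \<le> CARD('n)" and u: "norm u = 1" and \<delta>: "0 < \<delta>" "\<delta> \<le> 1"
    and r: "0 \<le> r" "r \<le> c" and w: "0 \<le> w"
    and S: "S \<in> sets lborel" "S \<subseteq> shell x r \<delta> \<inter> {y. t \<le> (y - x) \<bullet> u \<and> (y - x) \<bullet> u \<le> t + w}"
  shows "emeasure lborel S \<le> ennreal (shell_slab_const CARD('n) c * \<delta> * w)"
proof -
  let ?n = "CARD('n)"
  define R1 R2 where "R1 = max 0 (r - \<delta>)" and "R2 = r + \<delta>"
  let ?slab = "{y. R1 < dist y x \<and> dist y x < R2 \<and> t \<le> (y - x) \<bullet> u \<and> (y - x) \<bullet> u \<le> t + w}"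
  have R: "0 \<le> R1" "R1 \<le> R2" "R2 \<le> c + 1" "R2\<^sup>2 - R1\<^sup>2 \<le> 4 * \<delta> * (c + 1)"
    using power2_sum_minus_max_le[OF r(1) \<delta>(1)] r \<delta> unfolding R1_def R2_def
    by (auto intro: order.trans mult_left_mono)
  have "S \<subseteq> ?slab \<union> {x}"
    using S(2) by (auto simp: shell_def R1_def R2_def abs_less_iff)
  then have "emeasure lborel S \<le> emeasure lborel (?slab \<union> {x})"
    by (intro emeasure_mono) measurable
  also have "\<dots> \<le> emeasure lborel ?slab + emeasure lborel {x}"
    by (intro emeasure_subadditive) measurable
  also have "\<dots> \<le> ennreal (unit_ball_vol (?n - 1) * (?n - 1) * R2 ^ (?n - 3) * (R2\<^sup>2 - R1\<^sup>2) * w)"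
    using emeasure_annulus_slab_le[OF dim u R(1,2) w, of x t] by simp
  also have "\<dots> \<le> ennreal (unit_ball_vol (?n - 1) * (?n - 1) * (c + 1) ^ (?n - 3) * (4 * \<delta> * (c + 1)) * w)"
    using R w \<delta> r by (intro ennreal_leI mult_right_mono mult_mono mult_left_mono power_mono) auto
  also have "\<dots> = ennreal (shell_slab_const ?n c * \<delta> * w)"
    by (simp add: shell_slab_const_def algebra_simps)
  finally show ?thesis .
qed

lemma inner_diff_dist_sq:
  fixes x1 x2 y :: "'a::real_inner"
  shows "2 * ((y - x1) \<bullet> (x2 - x1)) = (dist y x1)\<^sup>2 + (dist x1 x2)\<^sup>2 - (dist y x2)\<^sup>2"
proof -
  have "y - x2 = (y - x1) - (x2 - x1)"
    by simp
  then have "(dist y x2)\<^sup>2 = (dist y x1)\<^sup>2 - 2 * ((y - x1) \<bullet> (x2 - x1)) + (dist x2 x1)\<^sup>2"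
    by (simp add: dist_norm power2_norm_eq_inner inner_diff_left inner_diff_right inner_commute)
  then show ?thesis
    by (simp add: dist_commute)
qed

lemma shell_dist_sq_bounds:
  assumes "y \<in> shell x r \<delta>"
  shows "(max 0 (r - \<delta>))\<^sup>2 \<le> (dist y x)\<^sup>2" "(dist y x)\<^sup>2 \<le> (r + \<delta>)\<^sup>2"
  using assms by (auto simp: shell_def abs_less_iff intro!: power_mono)

lemma shell_Int_shell_subset_slab:
  fixes x1 x2 :: "'a::real_inner"
  assumes "x1 \<noteq> x2" "0 < \<delta>" "0 \<le> r1" "0 \<le> r2"
  obtains t where "shell x1 r1 \<delta> \<inter> shell x2 r2 \<delta> \<subseteq> {y. t \<le> (y - x1) \<bullet> ((x2 - x1) /\<^sub>R dist x1 x2) \<and>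
      (y - x1) \<bullet> ((x2 - x1) /\<^sub>R dist x1 x2) \<le> t + 2 * \<delta> * (max r1 \<delta> + max r2 \<delta>) / dist x1 x2}"
proof -
  define d where "d = dist x1 x2"
  define L U where "L r = (max 0 (r - \<delta>))\<^sup>2" and "U r = (r + \<delta>)\<^sup>2" for r
  have d: "0 < d"
    using assms by (simp add: d_def)
  have width: "(U r1 - L r1 + U r2 - L r2) / (2 * d) \<le> 2 * \<delta> * (max r1 \<delta> + max r2 \<delta>) / d"
  proof -
    have "U r1 - L r1 + U r2 - L r2 \<le> 4 * \<delta> * (max r1 \<delta> + max r2 \<delta>)"
      using power2_sum_minus_max_le[of r1 \<delta>] power2_sum_minus_max_le[of r2 \<delta>] assms
      by (simp add: L_def U_def algebra_simps)
    then show ?thesis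
      using divide_right_mono[of _ _ "2 * d"] d by fastforce
  qed
  have "shell x1 r1 \<delta> \<inter> shell x2 r2 \<delta> \<subseteq> {y. (L r1 + d\<^sup>2 - U r2) / (2 * d) \<le> (y - x1) \<bullet> ((x2 - x1) /\<^sub>R d) \<and>
      (y - x1) \<bullet> ((x2 - x1) /\<^sub>R d) \<le> (L r1 + d\<^sup>2 - U r2) / (2 * d) + 2 * \<delta> * (max r1 \<delta> + max r2 \<delta>) / d}"
  proof
    fix y assume y: "y \<in> shell x1 r1 \<delta> \<inter> shell x2 r2 \<delta>"
    have u: "(y - x1) \<bullet> ((x2 - x1) /\<^sub>R d) = ((dist y x1)\<^sup>2 + d\<^sup>2 - (dist y x2)\<^sup>2) / (2 * d)"
      unfolding inner_scaleR_right using inner_diff_dist_sq[of y x1 x2] d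
      by (simp add: d_def field_simps)
    have bounds: "L r1 \<le> (dist y x1)\<^sup>2" "(dist y x1)\<^sup>2 \<le> U r1" "L r2 \<le> (dist y x2)\<^sup>2" "(dist y x2)\<^sup>2 \<le> U r2"
      using y shell_dist_sq_bounds[of y] by (auto simp: L_def U_def)
    have "(L r1 + d\<^sup>2 - U r2) / (2 * d) \<le> (y - x1) \<bullet> ((x2 - x1) /\<^sub>R d)"
      unfolding u by (rule divide_right_mono) (use bounds d in auto)
    moreover have "(y - x1) \<bullet> ((x2 - x1) /\<^sub>R d) \<le> (L r1 + d\<^sup>2 - U r2) / (2 * d) + (U r1 - L r1 + U r2 - L r2) / (2 * d)"
      unfolding u add_divide_distrib[symmetric] by (rule divide_right_mono) (use bounds d in auto)
    ultimately show "y \<in> {y. (L r1 + d\<^sup>2 - U r2) / (2 * d) \<le> (y - x1) \<bullet> ((x2 - x1) /\<^sub>R d) \<and>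
        (y - x1) \<bullet> ((x2 - x1) /\<^sub>R d) \<le> (L r1 + d\<^sup>2 - U r2) / (2 * d) + 2 * \<delta> * (max r1 \<delta> + max r2 \<delta>) / d}"
      using width by simp
  qed
  then show ?thesis
    unfolding d_def by (rule that)
qed

lemma emeasure_shell_Int_shell_le:
  fixes x1 x2 :: "real^'n::finite"
  assumes dim: "3 \<le> CARD('n)" and \<delta>: "0 < \<delta>" "\<delta> \<le> 1"
    and r: "0 \<le> r1" "r1 \<le> c" "0 \<le> r2" "r2 \<le> c"
  shows "emeasure lborel (shell x1 r1 \<delta> \<inter> shell x2 r2 \<delta>)
     \<le> ennreal (4 * (c + 1) * shell_slab_const CARD('n) c * \<delta>\<^sup>2 / max (dist x1 x2) \<delta>)"
proof -
  let ?K = "shell_slab_const CARD('n) c"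
  let ?S = "shell x1 r1 \<delta> \<inter> shell x2 r2 \<delta>"
  have K: "0 \<le> ?K"
    using r by (simp add: shell_slab_const_nonneg)
  show ?thesis
  proof (cases "dist x1 x2 \<le> \<delta>")
    case True
    obtain i :: 'n where True
      by simp
    have "\<bar>(y - x1) \<bullet> axis i 1\<bar> \<le> c + 1" if "y \<in> shell x1 r1 \<delta>" for y
    proof -
      have "\<bar>(y - x1) \<bullet> axis i 1\<bar> \<le> dist y x1"
        using Cauchy_Schwarz_ineq2[of "y - x1" "axis i 1"] by (simp add: dist_norm)
      then show ?thesis
        using that r \<delta> by (auto simp: shell_def abs_less_iff)
    qed
    then have "emeasure lborel ?S \<le> ennreal (?K * \<delta> * (2 * (c + 1)))"
      using r by (intro emeasure_shell_slab_le[OF dim _ \<delta> r(1,2), where u = "axis i 1" and t = "- (c + 1)"])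
        (force simp: abs_le_iff)+
    also have "\<dots> \<le> ennreal (4 * (c + 1) * ?K * \<delta>\<^sup>2 / max (dist x1 x2) \<delta>)"
      using True K r \<delta> by (intro ennreal_leI) (simp add: max_def power2_eq_square field_simps mult_right_mono)
    finally show ?thesis .
  next
    case False
    define d where "d = dist x1 x2"
    have d: "0 < d" "\<delta> < d" "x1 \<noteq> x2"
      using False \<delta> by (auto simp: d_def)
    obtain t where "?S \<subseteq> {y. t \<le> (y - x1) \<bullet> ((x2 - x1) /\<^sub>R d) \<and>
        (y - x1) \<bullet> ((x2 - x1) /\<^sub>R d) \<le> t + 2 * \<delta> * (max r1 \<delta> + max r2 \<delta>) / d}"
      using shell_Int_shell_subset_slab[OF d(3) \<delta>(1) r(1,3)] unfolding d_def by blast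
    then have "emeasure lborel ?S \<le> ennreal (?K * \<delta> * (2 * \<delta> * (max r1 \<delta> + max r2 \<delta>) / d))"
      using d \<delta> r by (intro emeasure_shell_slab_le[OF dim _ \<delta> r(1,2), where u = "(x2 - x1) /\<^sub>R d" and t = t])
        (auto simp: d_def dist_norm norm_minus_commute)
    also have "\<dots> \<le> ennreal (?K * \<delta> * (4 * \<delta> * (c + 1) / d))"
      using K d \<delta> r by (intro ennreal_leI mult_left_mono divide_right_mono) auto
    also have "\<dots> = ennreal (4 * (c + 1) * ?K * \<delta>\<^sup>2 / max (dist x1 x2) \<delta>)"
      using d by (simp add: d_def[symmetric] max_def power2_eq_square algebra_simps)
    finally show ?thesis .
  qed
qed

lemma shells_meet_imp_dist_params_less:
  fixes x1 x2 :: "'a::metric_space"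
  assumes "y \<in> shell x1 r1 \<delta> \<inter> shell x2 r2 \<delta>"
  shows "dist (x1, r1) (x2, r2) < 2 * dist x1 x2 + 2 * \<delta>" "dist x1 x2 < r1 + r2 + 2 * \<delta>"
proof -
  have y: "\<bar>dist y x1 - r1\<bar> < \<delta>" "\<bar>dist y x2 - r2\<bar> < \<delta>"
    using assms by (auto simp: shell_def)
  have "\<bar>dist y x1 - dist y x2\<bar> \<le> dist x1 x2"
    using dist_triangle[of y x1 x2] dist_triangle[of y x2 x1] by (auto simp: dist_commute abs_le_iff)
  then have "dist r1 r2 < dist x1 x2 + 2 * \<delta>"
    using y by (auto simp: dist_real_def abs_less_iff)
  moreover have "dist (x1, r1) (x2, r2) \<le> dist x1 x2 + dist r1 r2"
    unfolding dist_Pair_Pair by (rule sqrt_sum_squares_le_sum) auto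
  ultimately show "dist (x1, r1) (x2, r2) < 2 * dist x1 x2 + 2 * \<delta>"
    by linarith
  show "dist x1 x2 < r1 + r2 + 2 * \<delta>"
    using dist_triangle[of x1 x2 y] y by (auto simp: dist_commute abs_less_iff)
qed

lemma measure_shell_Int_shell_le:
  fixes x1 x2 :: "real^'n::finite"
  assumes dim: "3 \<le> CARD('n)" and \<delta>: "0 < \<delta>" "\<delta> < 1/2"
    and r: "0 \<le> r1" "r1 \<le> c" "0 \<le> r2" "r2 \<le> c"
  shows "measure lborel (shell x1 r1 \<delta> \<inter> shell x2 r2 \<delta>)
    \<le> 16 * (c + 1) * shell_slab_const CARD('n) c * \<delta>\<^sup>2 *
       (if dist (x1, r1) (x2, r2) < 4 * c + 3 then 1 / max (dist (x1, r1) (x2, r2)) \<delta> else 0)"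
proof (cases "shell x1 r1 \<delta> \<inter> shell x2 r2 \<delta> = {}")
  case True
  then show ?thesis
    using r \<delta> shell_slab_const_nonneg[of c] by simp
next
  case False
  let ?K = "shell_slab_const CARD('n) c"
  let ?D = "dist (x1, r1) (x2, r2)"
  have K: "0 \<le> ?K"
    using r by (simp add: shell_slab_const_nonneg)
  obtain y where "y \<in> shell x1 r1 \<delta> \<inter> shell x2 r2 \<delta>"
    using False by blast
  from shells_meet_imp_dist_params_less[OF this] have D: "?D < 4 * c + 3" "max ?D \<delta> \<le> 4 * max (dist x1 x2) \<delta>"
    using r \<delta> by auto
  have "4 / (4 * max (dist x1 x2) \<delta>) \<le> 4 / max ?D \<delta>"
    using D(2) \<delta> by (intro divide_left_mono) (auto intro: mult_pos_pos)
  then have inv: "1 / max (dist x1 x2) \<delta> \<le> 4 * (1 / max ?D \<delta>)"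
    by simp
  have "measure lborel (shell x1 r1 \<delta> \<inter> shell x2 r2 \<delta>) \<le> 4 * (c + 1) * ?K * \<delta>\<^sup>2 * (1 / max (dist x1 x2) \<delta>)"
    unfolding measure_def using emeasure_shell_Int_shell_le[OF dim \<delta>(1) _ r] K r \<delta>
    by (intro enn2real_leI) auto
  also have "\<dots> \<le> 4 * (c + 1) * ?K * \<delta>\<^sup>2 * (4 * (1 / max ?D \<delta>))"
    using K r by (intro mult_left_mono[OF inv]) auto
  also have "\<dots> = 16 * (c + 1) * ?K * \<delta>\<^sup>2 * (if ?D < 4 * c + 3 then 1 / max ?D \<delta> else 0)"
    using D(1) by simp
  finally show ?thesis .
qed

section \<open>Dyadic counting\<close>

lemma ex_dyadic_interval:
  fixes D \<delta> :: real
  assumes "0 < \<delta>" "\<delta> \<le> D" "D < 2 ^ N * \<delta>"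
  obtains k where "k < N" "2 ^ k * \<delta> \<le> D" "D < 2 ^ Suc k * \<delta>"
  using assms
proof (induction N)
  case (Suc N)
  show ?case
  proof (cases "D < 2 ^ N * \<delta>")
    case True
    then show ?thesis
      using Suc.IH Suc.prems by (meson less_SucI)
  next
    case False
    then show ?thesis
      using Suc.prems by (intro Suc.prems(1)[of N]) auto
  qed
qed simp

lemma inverse_max_le_dyadic_sum:
  fixes D \<delta> :: real
  assumes "0 < \<delta>" "D < 2 ^ N * \<delta>"
  shows "1 / max D \<delta> \<le> (if D < \<delta> then 1 / \<delta> else 0) +
    (\<Sum>k<N. if 2 ^ k * \<delta> \<le> D \<and> D < 2 ^ Suc k * \<delta> then 1 / (2 ^ k * \<delta>) else 0)"
proof (cases "D < \<delta>")
  case True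
  moreover have "0 \<le> (\<Sum>k<N. if 2 ^ k * \<delta> \<le> D \<and> D < 2 ^ Suc k * \<delta> then 1 / (2 ^ k * \<delta>) else 0)"
    using assms by (intro sum_nonneg) auto
  ultimately show ?thesis
    by simp
next
  case False
  then obtain k where k: "k < N" "2 ^ k * \<delta> \<le> D" "D < 2 ^ Suc k * \<delta>"
    using ex_dyadic_interval assms by (metis not_less)
  have "1 / max D \<delta> \<le> 1 / (2 ^ k * \<delta>)"
    using k assms by (intro divide_left_mono) auto
  also have "\<dots> = (if 2 ^ k * \<delta> \<le> D \<and> D < 2 ^ Suc k * \<delta> then 1 / (2 ^ k * \<delta>) else 0)"
    using k by simp
  also have "\<dots> \<le> (\<Sum>k<N. if 2 ^ k * \<delta> \<le> D \<and> D < 2 ^ Suc k * \<delta> then 1 / (2 ^ k * \<delta>) else 0)"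
    by (rule member_le_sum) (use k assms in auto)
  finally show ?thesis
    using False by simp
qed

lemma sum_inverse_dist_le_dyadic:
  fixes q :: "'i \<Rightarrow> 'a::metric_space"
  assumes I: "finite I" and \<delta>: "0 < \<delta>" and N: "R0 \<le> 2 ^ N * \<delta>"
    and count: "\<And>\<rho>. \<delta> \<le> \<rho> \<Longrightarrow> real (card {j\<in>I. q j \<in> ball p \<rho>}) \<le> A * \<rho>"
  shows "(\<Sum>j\<in>I. if dist p (q j) < R0 then 1 / max (dist p (q j)) \<delta> else 0) \<le> A * (1 + 2 * real N)"
proof -
  let ?D = "\<lambda>j. dist p (q j)"
  let ?near = "\<lambda>j. if ?D j < \<delta> then 1 / \<delta> else 0"
  let ?ring = "\<lambda>k j. if 2 ^ k * \<delta> \<le> ?D j \<and> ?D j < 2 ^ Suc k * \<delta> then 1 / (2 ^ k * \<delta>) else 0"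
  have "(if ?D j < R0 then 1 / max (?D j) \<delta> else 0) \<le> ?near j + (\<Sum>k<N. ?ring k j)" for j
  proof (cases "?D j < R0")
    case True
    then show ?thesis
      using inverse_max_le_dyadic_sum[OF \<delta>, of "?D j" N] N by simp
  next
    case False
    have "0 \<le> (\<Sum>k<N. ?ring k j)"
      using \<delta> by (intro sum_nonneg) auto
    then show ?thesis
      using False \<delta> by simp
  qed
  then have "(\<Sum>j\<in>I. if ?D j < R0 then 1 / max (?D j) \<delta> else 0)
      \<le> (\<Sum>j\<in>I. ?near j) + (\<Sum>k<N. \<Sum>j\<in>I. ?ring k j)"
    by (subst sum.swap) (simp add: sum_mono flip: sum.distrib)
  also have "\<dots> \<le> A + (\<Sum>k<N. 2 * A)"
  proof (intro add_mono sum_mono)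
    have "(\<Sum>j\<in>I. ?near j) = real (card {j\<in>I. q j \<in> ball p \<delta>}) * (1 / \<delta>)"
      using I by (simp add: sum.inter_filter[symmetric] ball_def)
    also have "\<dots> \<le> A * \<delta> * (1 / \<delta>)"
      using count[of \<delta>] \<delta> by (intro mult_right_mono) auto
    finally show "(\<Sum>j\<in>I. ?near j) \<le> A"
      using \<delta> by simp
    fix k
    have "(\<Sum>j\<in>I. ?ring k j) = real (card {j\<in>I. 2 ^ k * \<delta> \<le> ?D j \<and> ?D j < 2 ^ Suc k * \<delta>}) * (1 / (2 ^ k * \<delta>))"
      using I by (simp add: sum.inter_filter[symmetric])
    also have "\<dots> \<le> real (card {j\<in>I. q j \<in> ball p (2 ^ Suc k * \<delta>)}) * (1 / (2 ^ k * \<delta>))"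
      using I \<delta> by (intro mult_right_mono of_nat_mono card_mono) (auto simp: ball_def)
    also have "\<dots> \<le> A * (2 ^ Suc k * \<delta>) * (1 / (2 ^ k * \<delta>))"
      using \<delta> by (intro mult_right_mono count) (auto intro: order.trans[OF _ mult_right_mono[of 1]])
    finally show "(\<Sum>j\<in>I. ?ring k j) \<le> 2 * A"
      using \<delta> by simp
  qed
  also have "\<dots> = A * (1 + 2 * real N)"
    by (simp add: algebra_simps)
  finally show ?thesis .
qed

lemma sum_inverse_dist_le_log:
  fixes q :: "'i \<Rightarrow> 'a::metric_space"
  assumes I: "finite I" and \<delta>: "0 < \<delta>" "\<delta> \<le> 1/2" and R0: "1 \<le> R0" and A: "0 \<le> A"
    and count: "\<And>\<rho>. \<delta> \<le> \<rho> \<Longrightarrow> real (card {j\<in>I. q j \<in> ball p \<rho>}) \<le> A * \<rho>"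
  shows "(\<Sum>j\<in>I. if dist p (q j) < R0 then 1 / max (dist p (q j)) \<delta> else 0)
     \<le> A * (5 + 2 * log 2 R0) * log 2 (1 / \<delta>)"
proof -
  define N where "N = nat \<lceil>log 2 (R0 / \<delta>)\<rceil>"
  have log_\<delta>: "1 \<le> log 2 (1 / \<delta>)" and log_R0: "0 \<le> log 2 R0"
    using \<delta> R0 by (simp_all add: le_log_iff field_simps)
  have log_split: "log 2 (R0 / \<delta>) = log 2 R0 + log 2 (1 / \<delta>)"
    using \<delta> R0 by (simp add: log_divide log_mult flip: log_inverse)
  have pos: "0 < log 2 (R0 / \<delta>)"
    using log_\<delta> log_R0 log_split by linarith
  have "R0 / \<delta> = 2 powr log 2 (R0 / \<delta>)"
    using \<delta> R0 by simp
  also have "\<dots> \<le> 2 powr N"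
    unfolding N_def by (intro powr_mono) linarith+
  finally have "R0 \<le> 2 ^ N * \<delta>"
    using \<delta> by (simp add: powr_realpow field_simps)
  then have "(\<Sum>j\<in>I. if dist p (q j) < R0 then 1 / max (dist p (q j)) \<delta> else 0) \<le> A * (1 + 2 * real N)"
    by (rule sum_inverse_dist_le_dyadic[OF I \<delta>(1) _ count])
  also have "\<dots> \<le> A * ((5 + 2 * log 2 R0) * log 2 (1 / \<delta>))"
  proof (intro mult_left_mono A)
    have "real N \<le> log 2 R0 + log 2 (1 / \<delta>) + 1"
      unfolding N_def log_split[symmetric] using pos by linarith
    then show "1 + 2 * real N \<le> (5 + 2 * log 2 R0) * log 2 (1 / \<delta>)"
      using log_\<delta> log_R0 mult_left_mono[OF log_\<delta> log_R0] by (simp add: algebra_simps)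
  qed
  finally show ?thesis
    by (simp add: mult.assoc)
qed

section \<open>The \<open>L\<^sup>2\<close> estimate\<close>

lemma double_sum_le_Schur:
  fixes a :: "'i \<Rightarrow> real" and \<mu> :: "'i \<Rightarrow> 'i \<Rightarrow> real"
  assumes sym: "\<And>i j. \<mu> i j = \<mu> j i" and nonneg: "\<And>i j. 0 \<le> \<mu> i j"
  shows "(\<Sum>i\<in>I. \<Sum>j\<in>I. a i * a j * \<mu> i j) \<le> (\<Sum>i\<in>I. (a i)\<^sup>2 * (\<Sum>j\<in>I. \<mu> i j))"
proof -
  have "a i * a j * \<mu> i j \<le> (a i)\<^sup>2 * \<mu> i j / 2 + (a j)\<^sup>2 * \<mu> i j / 2" for i j
  proof -
    have "2 * (a i * a j) * \<mu> i j \<le> ((a i)\<^sup>2 + (a j)\<^sup>2) * \<mu> i j"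
      using sum_squares_bound[of "a i" "a j"] nonneg by (intro mult_right_mono) auto
    then show ?thesis
      by (simp add: field_simps)
  qed
  then have "(\<Sum>i\<in>I. \<Sum>j\<in>I. a i * a j * \<mu> i j)
      \<le> (\<Sum>i\<in>I. \<Sum>j\<in>I. (a i)\<^sup>2 * \<mu> i j / 2) + (\<Sum>i\<in>I. \<Sum>j\<in>I. (a j)\<^sup>2 * \<mu> i j / 2)"
    by (simp add: sum_mono flip: sum.distrib)
  also have "(\<Sum>i\<in>I. \<Sum>j\<in>I. (a j)\<^sup>2 * \<mu> i j / 2) = (\<Sum>i\<in>I. \<Sum>j\<in>I. (a i)\<^sup>2 * \<mu> i j / 2)"
    by (subst sum.swap) (simp add: sym)
  finally show ?thesis
    by (simp add: sum_distrib_left sum_divide_distrib)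
qed

lemma integral_sum_indicator_sq_le:
  fixes E F :: "'i \<Rightarrow> 'a::euclidean_space set" and a :: "'i \<Rightarrow> real"
  assumes I: "finite I" and a: "\<And>i. i \<in> I \<Longrightarrow> 0 \<le> a i" and EF: "\<And>i. E i \<subseteq> F i"
    and E: "\<And>i. E i \<in> sets lborel" and F: "\<And>i. F i \<in> sets lborel"
    and fin: "\<And>i j. emeasure lborel (F i \<inter> F j) < \<infinity>"
  shows "(\<integral>y. (\<Sum>i\<in>I. a i * indicator (E i) y)\<^sup>2 \<partial>lborel)
     \<le> (\<Sum>i\<in>I. \<Sum>j\<in>I. a i * a j * measure lborel (F i \<inter> F j))"
proof -
  let ?f = "\<lambda>y. (\<Sum>i\<in>I. a i * indicator (E i) y)\<^sup>2"
  let ?g = "\<lambda>y. \<Sum>i\<in>I. \<Sum>j\<in>I. a i * a j * indicator (F i \<inter> F j) y"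
  have FF: "F i \<inter> F j \<in> sets lborel" for i j
    using F by auto
  have g: "integrable lborel ?g"
    using FF fin by (intro Bochner_Integration.integrable_sum integrable_mult_right integrable_real_indicator)
  have "0 \<le> (\<Sum>i\<in>I. a i * indicator (E i) y)" for y
    using a by (intro sum_nonneg) auto
  moreover have "(\<Sum>i\<in>I. a i * indicator (E i) y) \<le> (\<Sum>i\<in>I. a i * indicator (F i) y)" for y
    using a EF by (intro sum_mono mult_left_mono) (auto simp: indicator_def)
  moreover have "(\<Sum>i\<in>I. a i * indicator (F i) y)\<^sup>2 = ?g y" for y :: 'a
    by (simp add: power2_eq_square sum_product indicator_inter_arith algebra_simps)
  ultimately have f_le_g: "?f y \<le> ?g y" for y
    by (metis power_mono)
  have "integrable lborel ?f"
  proof (rule Bochner_Integration.integrable_bound[OF g])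
    show "?f \<in> borel_measurable lborel"
      using E by measurable
    show "AE y in lborel. norm (?f y) \<le> norm (?g y)"
      using f_le_g by (auto intro: order.trans[OF _ abs_ge_self])
  qed
  then have "integral\<^sup>L lborel ?f \<le> integral\<^sup>L lborel ?g"
    using g f_le_g by (rule Bochner_Integration.integral_mono)
  also have "\<dots> = (\<Sum>i\<in>I. \<Sum>j\<in>I. a i * a j * measure lborel (F i \<inter> F j))"
    using FF fin by (simp add: integrable_real_indicator)
  finally show ?thesis .
qed

lemma open_nbhd: "open (nbhd S \<delta>)"
proof -
  have "nbhd S \<delta> = (\<Union>z\<in>S. ball z \<delta>)"
    by (auto simp: nbhd_def ball_def dist_commute)
  then show ?thesis
    by auto
qed

definition nbhd_sphere_L2_const :: "nat \<Rightarrow> real \<Rightarrow> real" where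
  "nbhd_sphere_L2_const n c = 16 * (c + 1) * shell_slab_const n c * (5 + 2 * log 2 (4 * c + 3))"

lemma nbhd_sphere_L2_const_pos:
  assumes "3 \<le> n" "0 \<le> c"
  shows "0 < nbhd_sphere_L2_const n c"
proof -
  have "0 < shell_slab_const n c"
    using assms by (simp add: shell_slab_const_def)
  moreover have "0 \<le> log 2 (4 * c + 3)"
    using assms(2) by simp
  ultimately show ?thesis
    using assms(2) by (simp add: nbhd_sphere_L2_const_def add_pos_nonneg)
qed

lemma integral_sum_nbhd_sphere_sq_le:
  fixes x :: "'i \<Rightarrow> real^'n::finite" and r a :: "'i \<Rightarrow> real"
  assumes dim: "3 \<le> CARD('n)" and \<delta>: "0 < \<delta>" "\<delta> < 1/2" and c: "0 \<le> c" and A: "0 \<le> A"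
    and I: "finite I" and r: "\<And>i. i \<in> I \<Longrightarrow> 0 \<le> r i \<and> r i \<le> c"
    and count: "\<And>p \<rho>. \<delta> \<le> \<rho> \<Longrightarrow> real (card {i\<in>I. (x i, r i) \<in> ball p \<rho>}) \<le> A * \<rho>"
    and a: "\<And>i. i \<in> I \<Longrightarrow> 0 \<le> a i"
  shows "(\<integral>y. (\<Sum>i\<in>I. a i * indicator (nbhd (sphere (x i) (r i)) \<delta>) y)\<^sup>2 \<partial>lborel)
    \<le> nbhd_sphere_L2_const CARD('n) c * \<delta>\<^sup>2 * log 2 (1 / \<delta>) * A * (\<Sum>i\<in>I. (a i)\<^sup>2)"
proof -
  let ?K = "16 * (c + 1) * shell_slab_const CARD('n) c"
  let ?L = "A * (5 + 2 * log 2 (4 * c + 3)) * log 2 (1 / \<delta>)"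
  define \<mu> where "\<mu> i j = measure lborel (shell (x i) (r i) \<delta> \<inter> shell (x j) (r j) \<delta>)" for i j
  have K: "0 \<le> ?K"
    using c by (simp add: shell_slab_const_nonneg)
  have row_sum: "(\<Sum>j\<in>I. \<mu> i j) \<le> ?K * \<delta>\<^sup>2 * ?L" if "i \<in> I" for i
  proof -
    let ?h = "\<lambda>j. if dist (x i, r i) (x j, r j) < 4 * c + 3 then 1 / max (dist (x i, r i) (x j, r j)) \<delta> else 0"
    have "(\<Sum>j\<in>I. \<mu> i j) \<le> (\<Sum>j\<in>I. ?K * \<delta>\<^sup>2 * ?h j)"
      unfolding \<mu>_def using r that by (intro sum_mono measure_shell_Int_shell_le[OF dim \<delta>]) auto
    also have "\<dots> = ?K * \<delta>\<^sup>2 * (\<Sum>j\<in>I. ?h j)"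
      by (simp add: sum_distrib_left)
    also have "\<dots> \<le> ?K * \<delta>\<^sup>2 * ?L"
      using K c \<delta> A count
      by (intro mult_left_mono sum_inverse_dist_le_log[OF I, where q = "\<lambda>j. (x j, r j)"]) auto
    finally show ?thesis .
  qed
  have "(\<integral>y. (\<Sum>i\<in>I. a i * indicator (nbhd (sphere (x i) (r i)) \<delta>) y)\<^sup>2 \<partial>lborel)
      \<le> (\<Sum>i\<in>I. \<Sum>j\<in>I. a i * a j * \<mu> i j)"
    unfolding \<mu>_def
  proof (rule integral_sum_indicator_sq_le[OF I a])
    show "nbhd (sphere (x i) (r i)) \<delta> \<subseteq> shell (x i) (r i) \<delta>" for i
      by (rule nbhd_sphere_subset_shell)
    show "nbhd (sphere (x i) (r i)) \<delta> \<in> sets lborel" for i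
      using borel_open[OF open_nbhd] by simp
    show "emeasure lborel (shell (x i) (r i) \<delta> \<inter> shell (x j) (r j) \<delta>) < \<infinity>" for i j
      by (intro emeasure_bounded_finite bounded_Int) (simp add: bounded_shell)
  qed (use shell_sets in simp_all)
  also have "\<dots> \<le> (\<Sum>i\<in>I. (a i)\<^sup>2 * (\<Sum>j\<in>I. \<mu> i j))"
    by (rule double_sum_le_Schur) (simp_all add: \<mu>_def Int_commute)
  also have "\<dots> \<le> (\<Sum>i\<in>I. (a i)\<^sup>2 * (?K * \<delta>\<^sup>2 * ?L))"
    using row_sum by (intro sum_mono mult_left_mono) auto
  also have "\<dots> = (\<Sum>i\<in>I. (a i)\<^sup>2) * (?K * \<delta>\<^sup>2 * ?L)"
    by (rule sum_distrib_right[symmetric])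
  also have "\<dots> = nbhd_sphere_L2_const CARD('n) c * \<delta>\<^sup>2 * log 2 (1 / \<delta>) * A * (\<Sum>i\<in>I. (a i)\<^sup>2)"
    unfolding nbhd_sphere_L2_const_def by (simp only: mult_ac)
  finally show ?thesis .
qed

lemma log2_le_ln_sq:
  fixes \<delta> :: real
  assumes "0 < \<delta>" "\<delta> \<le> 1/2"
  shows "log 2 (1 / \<delta>) \<le> (ln (1 / \<delta>) / ln 2)\<^sup>2"
proof -
  define t where "t = ln (1 / \<delta>) / ln 2"
  have "ln 2 \<le> ln (1 / \<delta>)"
    using assms by (subst ln_le_cancel_iff) (auto simp: field_simps)
  then have "1 \<le> t"
    by (simp add: t_def)
  then have "t * 1 \<le> t * t"
    by (intro mult_left_mono) auto
  then show ?thesis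
    by (simp add: log_def power2_eq_square flip: t_def)
qed

lemma L2_norm_sum_nbhd_sphere_le:
  fixes x :: "'i \<Rightarrow> real^'n::finite" and r a :: "'i \<Rightarrow> real"
  assumes dim: "3 \<le> CARD('n)" and \<delta>: "0 < \<delta>" "\<delta> < 1/2" and c: "0 \<le> c" and A: "0 \<le> A"
    and I: "finite I" and r: "\<And>i. i \<in> I \<Longrightarrow> 0 \<le> r i \<and> r i \<le> c"
    and count: "\<And>p \<rho>. \<delta> \<le> \<rho> \<Longrightarrow> real (card {i\<in>I. (x i, r i) \<in> ball p \<rho>}) \<le> A * \<rho>"
    and a: "\<And>i. i \<in> I \<Longrightarrow> 0 \<le> a i"
  shows "sqrt (\<integral>y. (\<Sum>i\<in>I. a i * indicator (nbhd (sphere (x i) (r i)) \<delta>) y)\<^sup>2 \<partial>lborel)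
    \<le> sqrt (nbhd_sphere_L2_const CARD('n) c) / ln 2 * \<delta> * ln (1 / \<delta>) * sqrt A * sqrt (\<Sum>i\<in>I. (a i)\<^sup>2)"
proof (rule real_le_lsqrt)
  let ?K = "nbhd_sphere_L2_const CARD('n) c"
  let ?S = "\<Sum>i\<in>I. (a i)\<^sup>2"
  have K: "0 < ?K"
    using nbhd_sphere_L2_const_pos[OF dim c] .
  have S: "0 \<le> ?S"
    by (simp add: sum_nonneg)
  have ln: "0 < ln (1 / \<delta>)"
    using \<delta> by simp
  show "0 \<le> sqrt ?K / ln 2 * \<delta> * ln (1 / \<delta>) * sqrt A * sqrt ?S"
    using K \<delta> ln A S by (intro mult_nonneg_nonneg divide_nonneg_nonneg) auto
  have "(\<integral>y. (\<Sum>i\<in>I. a i * indicator (nbhd (sphere (x i) (r i)) \<delta>) y)\<^sup>2 \<partial>lborel)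
      \<le> ?K * \<delta>\<^sup>2 * log 2 (1 / \<delta>) * A * ?S"
    by (rule integral_sum_nbhd_sphere_sq_le[OF dim \<delta> c A I r count a])
  also have "\<dots> \<le> ?K * \<delta>\<^sup>2 * (ln (1 / \<delta>) / ln 2)\<^sup>2 * A * ?S"
    using K A S log2_le_ln_sq[of \<delta>] \<delta> by (intro mult_right_mono mult_left_mono) auto
  also have "\<dots> = (sqrt ?K / ln 2 * \<delta> * ln (1 / \<delta>) * sqrt A * sqrt ?S)\<^sup>2"
    using K A S by (simp add: power_mult_distrib power_divide)
  finally show "(\<integral>y. (\<Sum>i\<in>I. a i * indicator (nbhd (sphere (x i) (r i)) \<delta>) y)\<^sup>2 \<partial>lborel)
      \<le> (sqrt ?K / ln 2 * \<delta> * ln (1 / \<delta>) * sqrt A * sqrt ?S)\<^sup>2" .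
qed

theorem proposition3p4:
  fixes c :: real
  assumes "CARD('n::finite) \<ge> 3" and "c \<ge> 1"
  shows "\<exists>C>0. \<forall>(\<delta>::real) (A::real) (I::nat set) (x::nat \<Rightarrow> real^'n) (r::nat \<Rightarrow> real) (a::nat \<Rightarrow> real).
     0 < \<delta> \<and> \<delta> < 1/2 \<and> A > 0 \<and> finite I \<and>
     (\<forall>i\<in>I. 1/c \<le> r i \<and> r i \<le> c) \<and>
     (\<forall>(p::(real^'n) \<times> real) (\<rho>::real). \<rho> \<ge> \<delta> \<longrightarrow>
         real (card {i\<in>I. (x i, r i) \<in> ball p \<rho>}) \<le> A * \<rho>) \<and>
     (\<forall>i\<in>I. a i \<ge> 0)
     \<longrightarrow> sqrt (\<integral>y. (\<Sum>i\<in>I. a i * indicator (nbhd (sphere (x i) (r i)) \<delta>) y)^2 \<partial>lborel)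
         \<le> C * \<delta> * ln (1/\<delta>) * sqrt A * sqrt (\<Sum>i\<in>I. (a i)^2)"
proof -
  let ?C = "sqrt (nbhd_sphere_L2_const CARD('n) c) / ln 2"
  have c: "0 \<le> c"
    using assms(2) by simp
  \<comment> \<open>The lower bound 1/c on the radii is only needed to know that they are nonnegative.\<close>
  have r: "0 \<le> r" if "1 / c \<le> r" for r
    using order.trans[OF _ that] c by simp
  have C: "0 < ?C"
    using nbhd_sphere_L2_const_pos[OF assms(1) c] by simp
  show ?thesis
    by (intro exI[of _ ?C] conjI[OF C] allI impI, elim conjE)
      (rule L2_norm_sum_nbhd_sphere_le[OF assms(1) _ _ c]; use r in auto)
qed

end
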